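(* For every integer $k\ge 0$, $$\int_0^{\pi/2} x^2\csc(x)\sin(2kx)\,dx = 3\zeta(2)\sum_{n=1}^k\frac{(-1)^{n+1}}{2n-1}-4\sum_{n=1}^k\frac{(-1)^{n+1}}{(2n-1)^3}.$$
   Context: $\zeta$ denotes the Riemann zeta function (so $\zeta(2)=\pi^2/6$). Empty sums (for $k=0$) equal $0$. *)

theory Defs
  imports "HOL-Analysis.Analysis"
begin

definition zeta :: "real \<Rightarrow> real" where
  "zeta s = (\<Sum>n. 1 / (real (Suc n)) powr s)"

end

theory Submission
  imports Defs
begin

text \<open>Telescoping \<open>sin (2(n+1)x) - sin (2nx) = 2 sin x cos ((2n+1)x)\<close> writes the kernel
  \<open>sin (2kx) / sin x\<close> as a sum of odd cosines, so the integral becomes a finite sum of the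
  elementary integrals of \<open>x\<^sup>2 cos ((2n+1)x)\<close> over \<open>[0, \<pi>/2]\<close>, each of which is read off an
  explicit antiderivative. Rewriting \<open>\<pi>\<^sup>2/2\<close> as \<open>3 \<zeta>(2)\<close> gives the stated form.\<close>

lemma zeta_2: "zeta 2 = pi\<^sup>2 / 6"
proof -
  have "(\<lambda>n. 1 / real (Suc n) powr 2) = (\<lambda>n. 1 / (1 + real n)\<^sup>2)"
    by (simp add: powr_numeral)
  then show ?thesis
    unfolding zeta_def using inverse_squares_sums by (simp add: sums_iff)
qed

lemma sin_even_multiple_eq_sum_cos:
  fixes x :: real
  shows "sin (2 * real k * x) = 2 * sin x * (\<Sum>n<k. cos ((2 * real n + 1) * x))"
proof (induction k)
  case 0
  then show ?case by simp
next
  case (Suc k)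
  have "sin (2 * real (Suc k) * x) = sin ((2 * real k + 1) * x + x)"
    and "sin (2 * real k * x) = sin ((2 * real k + 1) * x - x)"
    by (simp_all add: algebra_simps)
  then have "sin (2 * real (Suc k) * x) = sin (2 * real k * x) + 2 * sin x * cos ((2 * real k + 1) * x)"
    by (simp add: sin_add sin_diff)
  with Suc.IH show ?case
    by (simp add: distrib_left)
qed

lemma power2_cos_has_integral:
  fixes m a :: real
  assumes "m \<noteq> 0" and "0 \<le> a"
  shows "((\<lambda>x. x\<^sup>2 * cos (m * x)) has_integral
           a\<^sup>2 * sin (m * a) / m + 2 * a * cos (m * a) / m\<^sup>2 - 2 * sin (m * a) / m ^ 3) {0..a}"
proof -
  define F where "F x = x\<^sup>2 * sin (m * x) / m + 2 * x * cos (m * x) / m\<^sup>2 - 2 * sin (m * x) / m ^ 3"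
    for x
  have "(F has_real_derivative x\<^sup>2 * cos (m * x)) (at x)" for x
    unfolding F_def using \<open>m \<noteq> 0\<close>
    by (auto intro!: derivative_eq_intros simp: field_simps power2_eq_square power3_eq_cube)
  then have "((\<lambda>x. x\<^sup>2 * cos (m * x)) has_integral F a - F 0) {0..a}"
    using \<open>0 \<le> a\<close>
    by (intro fundamental_theorem_of_calculus)
       (auto simp: has_real_derivative_iff_has_vector_derivative has_vector_derivative_at_within)
  then show ?thesis
    by (simp add: F_def)
qed

lemma power2_cos_odd_has_integral:
  "((\<lambda>x. x\<^sup>2 * cos ((2 * real n + 1) * x)) has_integral
     (-1) ^ n * (pi\<^sup>2 / (4 * (2 * real n + 1)) - 2 / (2 * real n + 1) ^ 3)) {0..pi/2}"
proof -
  have "(2 * real n + 1) * (pi/2) = real (Suc (2 * n)) * pi / 2"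
    by simp
  then have sin_odd: "sin ((2 * real n + 1) * (pi/2)) = (-1) ^ n"
    by (simp only: sin_cos_npi)
  then have cos_odd: "cos ((2 * real n + 1) * (pi/2)) = 0"
    using sin_cos_squared_add[of "(2 * real n + 1) * (pi/2)"] by (simp add: power_mult[symmetric])
  have "((\<lambda>x. x\<^sup>2 * cos ((2 * real n + 1) * x)) has_integral
      (pi/2)\<^sup>2 * (-1) ^ n / (2 * real n + 1) - 2 * (-1) ^ n / (2 * real n + 1) ^ 3) {0..pi/2}"
    using power2_cos_has_integral[of "2 * real n + 1" "pi/2"] unfolding sin_odd cos_odd by simp
  then show ?thesis
    by (rule has_integral_eq_rhs) (simp add: power2_eq_square field_simps)
qed

theorem lemma2:
  fixes k :: nat
  shows "((\<lambda>x::real. x\<^sup>2 * (1 / sin x) * sin (2 * real k * x)) has_integral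
           (3 * zeta 2 * (\<Sum>n=1..k. (-1) ^ (n + 1) / (2 * real n - 1))
            - 4 * (\<Sum>n=1..k. (-1) ^ (n + 1) / (2 * real n - 1) ^ 3))) {0..pi/2}"
proof -
  let ?c = "\<lambda>n x. 2 * (x\<^sup>2 * cos ((2 * real n + 1) * x))"
  have integrand: "x\<^sup>2 * (1 / sin x) * sin (2 * real k * x) = (\<Sum>n<k. ?c n x)"
    if "x \<in> {0..pi/2}" for x
  proof (cases "x = 0")
    case False
    with that have "sin x \<noteq> 0"
      using sin_gt_zero[of x] by auto
    then show ?thesis
      unfolding sin_even_multiple_eq_sum_cos by (simp add: sum_distrib_left mult_ac)
  qed simp
  have "((\<lambda>x. \<Sum>n<k. ?c n x) has_integral
          (\<Sum>n<k. 2 * ((-1) ^ n * (pi\<^sup>2 / (4 * (2 * real n + 1)) - 2 / (2 * real n + 1) ^ 3))))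
        {0..pi/2}"
    by (intro has_integral_sum has_integral_mult_right power2_cos_odd_has_integral) simp
  moreover have "(\<Sum>n<k. 2 * ((-1) ^ n * (pi\<^sup>2 / (4 * (2 * real n + 1)) - 2 / (2 * real n + 1) ^ 3)))
      = pi\<^sup>2 / 2 * (\<Sum>n<k. (-1) ^ n / (2 * real n + 1)) - 4 * (\<Sum>n<k. (-1) ^ n / (2 * real n + 1) ^ 3)"
  proof -
    have termwise: "2 * (s * (pi\<^sup>2 / (4 * m) - 2 / m ^ 3)) = pi\<^sup>2 / 2 * (s / m) - 4 * (s / m ^ 3)"
      for s m :: real
      by (simp add: algebra_simps)
    show ?thesis
      by (simp only: termwise sum_subtractf sum_distrib_left)
  qed
  also have "\<dots> = 3 * zeta 2 * (\<Sum>n=1..k. (-1) ^ (n + 1) / (2 * real n - 1))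
      - 4 * (\<Sum>n=1..k. (-1) ^ (n + 1) / (2 * real n - 1) ^ 3)"
    by (simp add: zeta_2 sum.atLeast1_atMost_eq add.commute)
  ultimately show ?thesis
    using integrand has_integral_cong by (metis (lifting))
qed

end
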